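(* Let $\pi\in D_n$ and use the block decomposition and notation described in the context. Assume $r_\mu\ge 1$ and $\sum_{j=1}^{r_\mu} i_{k_j}\le k_1$ (i.e. $\Phi(\pi)$ is a standard OGS elementary element). Then $\pi$ can be written uniquely as $\pi=\pi^{\bullet}\cdot\pi^{\circ}$ with $\pi^{\bullet}\in Id^{\bullet}_n$ and $\pi^{\circ}\in S^{\circ}_n$, and $$\pi^{\circ}=\prod_{j=1}^{r_\mu}t_{k_j}^{i_{k_j}},\qquad \pi^{\bullet}=\Big(\prod_{\alpha\in A} w_{\operatorname{maj}_\alpha(\pi)}\Big)\cdot w_{L_{1_1}}\cdots w_{L_{1_{\nu_1}}}\cdot w_{L_{2_1}}\cdots w_{L_{2_{\nu_2}}}\cdots w_{L_{(\mu-1)_1}}\cdots w_{L_{(\mu-1)_{\nu_{\mu-1}}}},$$ where $A=\{\alpha\in\{1,\dots,\mu-1\}:\ \nu_\alpha \text{ is odd and } 1\le \operatorname{maj}_\alpha(\pi)<k_1\}$, the first product taken in increasing order of $\alpha$. Moreover, viewed in $S_n$, $\pi^{\circ}$ has the same standard OGS form as $\Phi(\pi)$.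
   Context: $D_n$ ($n\ge2$) is the Coxeter group with generators $s_{1'},s_1,\dots,s_{n-1}$ and relations $s^2=1$, $(s_i s_{i+1})^3=1$, $(s_is_j)^2=1$ for $|i-j|\ge 2$, $(s_{1'}s_2)^3=1$, $(s_{1'}s_i)^2=1$ for $i\ne 2$. Put $t_k=s_1\cdots s_{k-1}$ ($2\le k\le n$), $w_k=s_k s_{k-1}\cdots s_2 s_1 s_{1'} s_2\cdots s_k$ ($1\le k\le n-1$). Every $\pi\in D_n$ has a unique expression $w_{1}^{j_{1}} t_{2}^{i_{2}} w_{2}^{j_{2}} \cdots w_{n-1}^{j_{n-1}} t_{n}^{i_{n}}$ ($0\le i_k\le k-1$, $0\le j_k\le1$). $\Phi:D_n\to S_n$ is the homomorphism $s_{1'}\mapsto s_1$, $s_i\mapsto s_i$; $\Phi(\pi)=t_2^{i_2}\cdots t_n^{i_n}$ in $S_n$. $S^{\circ}_n=\langle s_1,\dots,s_{n-1}\rangle\le D_n$, and $Id^\bullet_n=\{\pi:\Phi(\pi)=1\}=\langle w_1,\dots,w_{n-1}\rangle$. Block decomposition: deleting factors with zero exponent, the expression of $\pi$ becomes a word of factors $t_k^{i}$ ($i\ge1$) and $w_L$; grouping maximal runs gives $\pi=\pi_1^\circ\pi_1^\bullet\pi_2^\circ\pi_2^\bullet\cdots\pi_{\mu-1}^\circ\pi_{\mu-1}^\bullet\pi_\mu^\circ$, where each $\pi_\alpha^\bullet=w_{L_{\alpha_1}}\cdots w_{L_{\alpha_{\nu_\alpha}}}$ ($\nu_\alpha\ge1$,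 $L_{\alpha_1}<\dots<L_{\alpha_{\nu_\alpha}}$) is a maximal run of $w$-factors, each $\pi_\alpha^\circ$ with $2\le\alpha\le\mu-1$ is a nonempty maximal run of $t$-factors, and $\pi_1^\circ,\pi_\mu^\circ$ are runs of $t$-factors that may be empty ($=1$). Listing all $t$-factors in order as $t_{k_1}^{i_{k_1}},\dots,t_{k_{r_\mu}}^{i_{k_{r_\mu}}}$ ($k_1<\dots<k_{r_\mu}$), $\pi_\alpha^\circ$ consists of those with indices $r_{\alpha-1}+1,\dots,r_\alpha$ ($r_0=0$). Define $\operatorname{maj}_\alpha(\pi)=\sum_{j=1}^{r_\alpha}i_{k_j}$. *)

theory Defs
  imports Main
begin

text \<open>D_n is realised faithfully as the group of even signed permutations:
  elements are functions on int (identity outside [-n,n]), group product is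
  function composition, identity is id.  Generators:\<close>

definition sD :: "nat \<Rightarrow> int \<Rightarrow> int" where
  "sD i = (\<lambda>x. if x = int i then int i + 1 else if x = int i + 1 then int i
             else if x = - int i then - (int i + 1) else if x = - (int i + 1) then - int i
             else x)"

definition s1' :: "int \<Rightarrow> int" where
  "s1' = (\<lambda>x. if x = 1 then -2 else if x = 2 then -1 else if x = -1 then 2
             else if x = -2 then 1 else x)"

text \<open>Submonoid (= subgroup, as generators are involutions) generated by a set of maps.\<close>
inductive_set gen :: "('a \<Rightarrow> 'a) set \<Rightarrow> ('a \<Rightarrow> 'a) set" for G where
  gen_id: "id \<in> gen G"
| gen_step: "f \<in> gen G \<Longrightarrow> g \<in> G \<Longrightarrow> f \<circ> g \<in> gen G"

definition Dn :: "nat \<Rightarrow> (int \<Rightarrow> int) set" where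
  "Dn n = gen (insert s1' {sD i | i. 1 \<le> i \<and> i \<le> n - 1})"

definition Scirc :: "nat \<Rightarrow> (int \<Rightarrow> int) set" where
  "Scirc n = gen {sD i | i. 1 \<le> i \<and> i \<le> n - 1}"

definition sS :: "nat \<Rightarrow> nat \<Rightarrow> nat" where
  "sS i = (\<lambda>x. if x = i then i + 1 else if x = i + 1 then i else x)"

text \<open>The homomorphism Phi : D_n -> S_n (s1' |-> s_1, s_i |-> s_i): forget the signs.\<close>
definition Phi :: "(int \<Rightarrow> int) \<Rightarrow> nat \<Rightarrow> nat" where
  "Phi p = (\<lambda>x. nat \<bar>p (int x)\<bar>)"

definition IdBullet :: "nat \<Rightarrow> (int \<Rightarrow> int) set" where
  "IdBullet n = {p \<in> Dn n. Phi p = id}"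

definition prodl :: "('a \<Rightarrow> 'a) list \<Rightarrow> 'a \<Rightarrow> 'a" where
  "prodl fs = foldr (\<circ>) fs id"

definition tD :: "nat \<Rightarrow> int \<Rightarrow> int" where
  "tD k = prodl (map sD [1..<k])"

definition wD :: "nat \<Rightarrow> int \<Rightarrow> int" where
  "wD k = prodl (map sD (rev [1..<k+1]) @ [s1'] @ map sD [2..<k+1])"

definition tS :: "nat \<Rightarrow> nat \<Rightarrow> nat" where
  "tS k = prodl (map sS [1..<k])"

definition elemD :: "nat \<Rightarrow> (nat \<Rightarrow> nat) \<Rightarrow> (nat \<Rightarrow> nat) \<Rightarrow> int \<Rightarrow> int" where
  "elemD n i j = prodl (concat (map (\<lambda>k. [wD k ^^ j k, tD (k+1) ^^ i (k+1)]) [1..<n]))"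

definition valid_exps :: "nat \<Rightarrow> (nat \<Rightarrow> nat) \<Rightarrow> (nat \<Rightarrow> nat) \<Rightarrow> bool" where
  "valid_exps n i j \<longleftrightarrow> (\<forall>k. 2 \<le> k \<and> k \<le> n \<longrightarrow> i k \<le> k - 1) \<and>
                        (\<forall>k. 1 \<le> k \<and> k \<le> n - 1 \<longrightarrow> j k \<le> 1)"

definition tIdx :: "nat \<Rightarrow> (nat \<Rightarrow> nat) \<Rightarrow> nat set" where
  "tIdx n i = {k. 2 \<le> k \<and> k \<le> n \<and> 1 \<le> i k}"

definition k1 :: "nat \<Rightarrow> (nat \<Rightarrow> nat) \<Rightarrow> nat" where
  "k1 n i = Min (tIdx n i)"

text \<open>In the reduced word, t_k lies strictly between w_{L'} and w_L (L' < L) iff L' < k <= L.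
  A maximal run of w-factors pi^bullet_alpha is determined by its first factor w_L:
  w_L is a first factor iff j_L = 1 and every earlier w_{L'} is separated from w_L by a
  nonzero t-factor.  The runs, ordered by alpha, are ordered by their first indices.\<close>
definition run_start :: "nat \<Rightarrow> (nat \<Rightarrow> nat) \<Rightarrow> (nat \<Rightarrow> nat) \<Rightarrow> nat \<Rightarrow> bool" where
  "run_start n i j L \<longleftrightarrow> 1 \<le> L \<and> L \<le> n - 1 \<and> j L = 1 \<and>
     (\<forall>L'. 1 \<le> L' \<and> L' < L \<and> j L' = 1 \<longrightarrow> (\<exists>k. L' < k \<and> k \<le> L \<and> 1 \<le> i k))"

text \<open>The run starting at L: the w_{L'} (L' >= L, j_{L'} = 1) not separated from w_L by a
  nonzero t-factor.  nu_alpha is its cardinality.\<close>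
definition run_of :: "nat \<Rightarrow> (nat \<Rightarrow> nat) \<Rightarrow> (nat \<Rightarrow> nat) \<Rightarrow> nat \<Rightarrow> nat set" where
  "run_of n i j L = {L'. L \<le> L' \<and> L' \<le> n - 1 \<and> j L' = 1 \<and> (\<forall>k. L < k \<and> k \<le> L' \<longrightarrow> i k = 0)}"

text \<open>maj_alpha = sum of the exponents of the t-factors in pi^circ_1 ... pi^circ_alpha, i.e.
  of all t_k preceding the first factor w_L of the alpha-th run, i.e. k <= L.\<close>
definition maj_at :: "(nat \<Rightarrow> nat) \<Rightarrow> nat \<Rightarrow> nat" where
  "maj_at i L = (\<Sum>k\<in>{2..L}. i k)"

definition run_starts :: "nat \<Rightarrow> (nat \<Rightarrow> nat) \<Rightarrow> (nat \<Rightarrow> nat) \<Rightarrow> nat list" where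
  "run_starts n i j = filter (run_start n i j) [1..<n]"

text \<open>The index set A (as a list of run starts, increasing alpha).\<close>
definition A_starts :: "nat \<Rightarrow> (nat \<Rightarrow> nat) \<Rightarrow> (nat \<Rightarrow> nat) \<Rightarrow> nat list" where
  "A_starts n i j = filter (\<lambda>L. odd (card (run_of n i j L)) \<and>
       1 \<le> maj_at i L \<and> maj_at i L < k1 n i) (run_starts n i j)"

definition pi_circ :: "nat \<Rightarrow> (nat \<Rightarrow> nat) \<Rightarrow> int \<Rightarrow> int" where
  "pi_circ n i = prodl (map (\<lambda>k. tD k ^^ i k) (filter (\<lambda>k. 1 \<le> i k) [2..<n+1]))"

definition pi_bullet :: "nat \<Rightarrow> (nat \<Rightarrow> nat) \<Rightarrow> (nat \<Rightarrow> nat) \<Rightarrow> int \<Rightarrow> int" where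
  "pi_bullet n i j = prodl (map (\<lambda>L. wD (maj_at i L)) (A_starts n i j)) \<circ>
                     prodl (map wD (filter (\<lambda>L. j L = 1) [1..<n]))"

end

theory Submission
  imports Defs
begin

text \<open>In the model of \<open>D_n\<close> by even signed permutations, \<open>w_k\<close> is the sign change at the two
  positions 1 and \<open>k+1\<close>, while the elements of \<open>S\<^sup>\<circ>_n\<close> permute the positive integers.
  Moving each factor \<open>w_L\<close> of the normal form to the left past \<open>t_2^(i_2) ... t_L^(i_L)\<close> turns it into the sign change at \<open>a_L\<close> and \<open>L+1\<close>, where \<open>a_L\<close> is the
  image of 1 under that product.  As all exponents add up to at most \<open>k_1\<close>, one has \<open>a_L = maj_L + 1\<close>
  if \<open>1 \<le> maj_L < k_1\<close> and \<open>a_L = 1\<close> otherwise.  Writing the sign change at \<open>a_L\<close> and \<open>L+1\<close>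
  as the product of those at \<open>{1, L+1}\<close> (that is, \<open>w_L\<close>) and at \<open>{1, a_L}\<close> (that is, \<open>w_(maj_L)\<close>
  or 1), and noting that \<open>maj_L\<close> is constant along each run of \<open>w\<close>-factors, the factors
  \<open>w_(maj_L)\<close> cancel in pairs inside each run and one survives for every run in \<open>A\<close>.
  Uniqueness holds because \<open>\<Phi>\<close> is injective on \<open>S\<^sup>\<circ>_n\<close>.\<close>

lemma prodl_Nil [simp]: "prodl [] = id"
  by (simp add: prodl_def)

lemma prodl_Cons [simp]: "prodl (f # fs) = f \<circ> prodl fs"
  by (simp add: prodl_def)

lemma prodl_append [simp]: "prodl (fs @ gs) = prodl fs \<circ> prodl gs"
  by (induction fs) (auto simp: comp_assoc)

lemma prodl_fixpoint: "(\<And>f. f \<in> set fs \<Longrightarrow> f x = x) \<Longrightarrow> prodl fs x = x"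
  by (induction fs) auto

lemma prodl_map_filter:
  "(\<And>x. \<not> P x \<Longrightarrow> f x = id) \<Longrightarrow> prodl (map f (filter P xs)) = prodl (map f xs)"
  by (induction xs) auto

lemma funpow_fixpoint: "f x = x \<Longrightarrow> (f ^^ m) x = x"
  by (induction m) auto

lemma gen_comp:
  assumes "f \<in> gen G" and "g \<in> gen G"
  shows "f \<circ> g \<in> gen G"
  using assms(2)
proof (induction g rule: gen.induct)
  case gen_id
  then show ?case using assms(1) by simp
next
  case (gen_step g h)
  then show ?case by (metis comp_assoc gen.gen_step)
qed

lemma gen_generator: "g \<in> G \<Longrightarrow> g \<in> gen G"
  using gen.gen_step[OF gen.gen_id] by fastforce

lemma gen_mono: "f \<in> gen G \<Longrightarrow> G \<subseteq> H \<Longrightarrow> f \<in> gen H"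
  by (induction f rule: gen.induct) (auto intro: gen.intros)

lemma gen_funpow: "f \<in> gen G \<Longrightarrow> f ^^ m \<in> gen G"
  by (induction m) (auto intro: gen.intros gen_comp)

lemma gen_prodl: "set fs \<subseteq> gen G \<Longrightarrow> prodl fs \<in> gen G"
  by (induction fs) (auto intro: gen.intros gen_comp)

lemma gen_invertible:
  assumes "f \<in> gen G" and "\<And>g. g \<in> G \<Longrightarrow> g \<circ> g = id"
  shows "\<exists>h. f \<circ> h = id \<and> h \<circ> f = id"
  using assms(1)
proof (induction f rule: gen.induct)
  case gen_id
  then show ?case by auto
next
  case (gen_step f g)
  then obtain h where "f \<circ> h = id" "h \<circ> f = id" by blast
  moreover have "g \<circ> g = id" using gen_step.hyps assms(2) by blast
  ultimately have "(f \<circ> g) \<circ> (g \<circ> h) = id" "(g \<circ> h) \<circ> (f \<circ> g) = id"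
    by (metis comp_assoc comp_id)+
  then show ?case by blast
qed

section \<open>Odd maps and the sign-forgetting map\<close>

definition odd_fun :: "(int \<Rightarrow> int) \<Rightarrow> bool" where
  "odd_fun f \<longleftrightarrow> (\<forall>x. f (- x) = - f x)"

lemma odd_fun_id: "odd_fun id"
  by (simp add: odd_fun_def)

lemma odd_fun_comp: "odd_fun f \<Longrightarrow> odd_fun g \<Longrightarrow> odd_fun (f \<circ> g)"
  by (simp add: odd_fun_def)

lemma odd_fun_funpow: "odd_fun f \<Longrightarrow> odd_fun (f ^^ m)"
  by (induction m) (auto simp: odd_fun_id odd_fun_comp)

lemma odd_fun_gen: "f \<in> gen G \<Longrightarrow> (\<And>g. g \<in> G \<Longrightarrow> odd_fun g) \<Longrightarrow> odd_fun f"
  by (induction f rule: gen.induct) (auto simp: odd_fun_id odd_fun_comp)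

lemma odd_fun_abs: "odd_fun f \<Longrightarrow> \<bar>f \<bar>z\<bar>\<bar> = \<bar>f z\<bar>"
  by (cases "z \<ge> 0") (auto simp: odd_fun_def)

lemma odd_fun_zero: "odd_fun f \<Longrightarrow> f 0 = 0"
  unfolding odd_fun_def by (metis add.inverse_neutral equation_minus_iff neg_equal_zero)

lemma sD_odd_fun: "1 \<le> k \<Longrightarrow> odd_fun (sD k)"
  by (auto simp: odd_fun_def sD_def)

lemma s1'_odd_fun: "odd_fun s1'"
  by (auto simp: odd_fun_def s1'_def)

lemma sD_involution: "1 \<le> k \<Longrightarrow> sD k \<circ> sD k = id"
  by (auto simp: sD_def fun_eq_iff)

lemma s1'_involution: "s1' \<circ> s1' = id"
  by (auto simp: s1'_def fun_eq_iff)

lemma Dn_odd_fun: "f \<in> Dn n \<Longrightarrow> odd_fun f"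
  unfolding Dn_def by (erule odd_fun_gen) (auto simp: sD_odd_fun s1'_odd_fun)

lemma Dn_invertible: "f \<in> Dn n \<Longrightarrow> \<exists>h. f \<circ> h = id \<and> h \<circ> f = id"
  unfolding Dn_def by (erule gen_invertible) (auto simp: sD_involution s1'_involution)

lemma Dn_inj: "f \<in> Dn n \<Longrightarrow> inj f"
  by (metis Dn_invertible inj_on_id inj_on_imageI2 image_id comp_def inj_def id_apply)

lemma Scirc_subset_Dn: "Scirc n \<subseteq> Dn n"
  unfolding Scirc_def Dn_def by (auto intro: gen_mono)

lemma Scirc_odd_fun: "f \<in> Scirc n \<Longrightarrow> odd_fun f"
  using Scirc_subset_Dn Dn_odd_fun by blast

lemma Scirc_pos: "f \<in> Scirc n \<Longrightarrow> 0 < x \<Longrightarrow> 0 < f x"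
  unfolding Scirc_def
proof (induction f arbitrary: x rule: gen.induct)
  case gen_id
  then show ?case by simp
next
  case (gen_step f g)
  then obtain k where "g = sD k" "1 \<le> k" by blast
  then have "0 < g x" using gen_step.prems by (auto simp: sD_def)
  then show ?case using gen_step.IH by simp
qed

lemma sD_in_Scirc: "1 \<le> k \<Longrightarrow> k < n \<Longrightarrow> sD k \<in> Scirc n"
  unfolding Scirc_def by (rule gen_generator) auto

lemma sD_in_Dn: "1 \<le> k \<Longrightarrow> k < n \<Longrightarrow> sD k \<in> Dn n"
  unfolding Dn_def by (rule gen_generator) auto

lemma s1'_in_Dn: "s1' \<in> Dn n"
  unfolding Dn_def by (rule gen_generator) auto

lemma prodl_in_Dn: "set fs \<subseteq> Dn n \<Longrightarrow> prodl fs \<in> Dn n"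
  unfolding Dn_def by (rule gen_prodl)

lemma Dn_comp: "f \<in> Dn n \<Longrightarrow> g \<in> Dn n \<Longrightarrow> f \<circ> g \<in> Dn n"
  unfolding Dn_def by (rule gen_comp)

lemma prodl_in_Scirc: "set fs \<subseteq> Scirc n \<Longrightarrow> prodl fs \<in> Scirc n"
  unfolding Scirc_def by (rule gen_prodl)

lemma funpow_in_Scirc: "f \<in> Scirc n \<Longrightarrow> f ^^ m \<in> Scirc n"
  unfolding Scirc_def by (rule gen_funpow)

lemma tD_in_Scirc: "k \<le> n \<Longrightarrow> tD k \<in> Scirc n"
  unfolding tD_def by (rule prodl_in_Scirc) (auto intro: sD_in_Scirc)

lemma wD_in_Dn: "k < n \<Longrightarrow> wD k \<in> Dn n"
  unfolding wD_def by (rule prodl_in_Dn) (auto intro: sD_in_Dn s1'_in_Dn)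

lemma Phi_comp: "odd_fun f \<Longrightarrow> Phi (f \<circ> g) = Phi f \<circ> Phi g"
  by (auto simp: Phi_def fun_eq_iff odd_fun_abs)

lemma Phi_id: "Phi id = id"
  by (auto simp: Phi_def fun_eq_iff)

lemma Phi_funpow: "odd_fun f \<Longrightarrow> Phi (f ^^ m) = Phi f ^^ m"
  by (induction m) (auto simp: Phi_id Phi_comp)

lemma Phi_prodl: "(\<And>f. f \<in> set fs \<Longrightarrow> odd_fun f) \<Longrightarrow> Phi (prodl fs) = prodl (map Phi fs)"
  by (induction fs) (auto simp: Phi_id Phi_comp)

lemma Phi_sD: "1 \<le> k \<Longrightarrow> Phi (sD k) = sS k"
  by (auto simp: Phi_def sD_def sS_def fun_eq_iff)

lemma Phi_tD: "Phi (tD k) = tS k"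
proof -
  have "Phi (tD k) = prodl (map Phi (map sD [1..<k]))"
    unfolding tD_def by (rule Phi_prodl) (auto intro: sD_odd_fun)
  also have "map Phi (map sD [1..<k]) = map sS [1..<k]"
    by (auto simp: Phi_sD)
  finally show ?thesis by (simp add: tS_def)
qed

lemma Phi_comp_IdBullet: "a \<in> IdBullet n \<Longrightarrow> Phi (a \<circ> b) = Phi b"
  unfolding IdBullet_def using Phi_comp[of a b] Dn_odd_fun[of a n] by auto

text \<open>The elements of \<^const>\<open>Scirc\<close> never change signs, so \<^const>\<open>Phi\<close> forgets nothing about them.\<close>

lemma Phi_inj_on_Scirc: "inj_on Phi (Scirc n)"
proof (rule inj_onI, rule ext)
  fix b c :: "int \<Rightarrow> int" and x :: int
  assume b: "b \<in> Scirc n" and c: "c \<in> Scirc n" and eq: "Phi b = Phi c"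
  have pos: "b z = c z" if "0 < z" for z
  proof -
    have "nat \<bar>b z\<bar> = nat \<bar>c z\<bar>"
      using fun_cong[OF eq, of "nat z"] that by (simp add: Phi_def)
    then show ?thesis using Scirc_pos[OF b that] Scirc_pos[OF c that] by simp
  qed
  have odd: "odd_fun b" "odd_fun c"
    using b c Scirc_odd_fun by blast+
  consider "0 < x" | "x = 0" | "0 < - x" by (cases "0::int" x rule: linorder_cases) auto
  then show "b x = c x"
  proof cases
    case 3
    then show ?thesis using pos[of "- x"] odd by (simp add: odd_fun_def)
  qed (simp_all add: pos odd odd_fun_zero)
qed

lemma IdBullet_Scirc_factorization_unique:
  assumes "a \<in> IdBullet n" "a' \<in> IdBullet n" "b \<in> Scirc n" "b' \<in> Scirc n"
    and eq: "a \<circ> b = a' \<circ> b'"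
  shows "a = a' \<and> b = b'"
proof -
  have "Phi b = Phi b'"
    using Phi_comp_IdBullet[of a n b] Phi_comp_IdBullet[of a' n b'] eq assms(1,2) by simp
  then have bb: "b = b'"
    using Phi_inj_on_Scirc assms(3,4) by (auto dest: inj_onD)
  obtain h where h: "b \<circ> h = id"
    using Dn_invertible assms(3) Scirc_subset_Dn by blast
  have "a = a \<circ> b \<circ> h" using h by (simp add: comp_assoc)
  also have "\<dots> = a'" using eq bb h by (simp add: comp_assoc)
  finally show ?thesis using bb by simp
qed

section \<open>Sign changes\<close>

definition sign_flip :: "(nat \<Rightarrow> bool) \<Rightarrow> int \<Rightarrow> int" where
  "sign_flip c = (\<lambda>x. if c (nat \<bar>x\<bar>) then - x else x)"

lemma sign_flip_comp: "sign_flip c \<circ> sign_flip d = sign_flip (\<lambda>y. c y \<noteq> d y)"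
  by (auto simp: sign_flip_def fun_eq_iff)

lemma sign_flip_False: "sign_flip (\<lambda>_. False) = id"
  by (auto simp: sign_flip_def fun_eq_iff)

lemma Phi_sign_flip: "Phi (sign_flip c) = id"
  by (auto simp: sign_flip_def fun_eq_iff Phi_def)

lemma prodl_sign_flips:
  "prodl (map (\<lambda>x. sign_flip (c x)) xs) = sign_flip (\<lambda>y. odd (length (filter (\<lambda>x. c x y) xs)))"
  by (induction xs) (auto simp: sign_flip_False sign_flip_comp intro!: arg_cong[where f = sign_flip])

lemma comp_sign_flip:
  assumes "odd_fun P" "inj P"
  shows "P \<circ> sign_flip c = sign_flip (\<lambda>y. \<exists>s. c s \<and> y = nat \<bar>P (int s)\<bar>) \<circ> P"
proof (rule ext)
  fix x
  have P_minus: "P (- z) = - P z" for z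
    using assms(1) by (simp add: odd_fun_def)
  have same_abs: "nat \<bar>P x\<bar> = nat \<bar>P (int s)\<bar> \<longleftrightarrow> nat \<bar>x\<bar> = s" for s
  proof
    assume "nat \<bar>P x\<bar> = nat \<bar>P (int s)\<bar>"
    then have "\<bar>P x\<bar> = \<bar>P (int s)\<bar>"
      by (metis abs_ge_zero nat_0_le)
    then have "P x = P (int s) \<or> P x = P (- int s)"
      unfolding P_minus abs_eq_iff by blast
    then have "x = int s \<or> x = - int s"
      using injD[OF assms(2)] by blast
    then show "nat \<bar>x\<bar> = s" by auto
  next
    assume "nat \<bar>x\<bar> = s"
    then have "int s = \<bar>x\<bar>" by simp
    then show "nat \<bar>P x\<bar> = nat \<bar>P (int s)\<bar>"
      using odd_fun_abs[OF assms(1), of x] by simp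
  qed
  have "(\<exists>s. c s \<and> nat \<bar>P x\<bar> = nat \<bar>P (int s)\<bar>) \<longleftrightarrow> c (nat \<bar>x\<bar>)"
    unfolding same_abs by blast
  then show "(P \<circ> sign_flip c) x = (sign_flip (\<lambda>y. \<exists>s. c s \<and> y = nat \<bar>P (int s)\<bar>) \<circ> P) x"
    by (simp add: sign_flip_def P_minus)
qed

lemma comp_sign_flip_pair:
  assumes "odd_fun P" "inj P" "P (int b) = int b" "a \<noteq> b"
  shows "P \<circ> sign_flip (\<lambda>s. (s = a) \<noteq> (s = b))
           = sign_flip (\<lambda>s. (s = nat \<bar>P (int a)\<bar>) \<noteq> (s = b)) \<circ> P"
proof -
  have "nat \<bar>P (int a)\<bar> \<noteq> b"
  proof
    assume "nat \<bar>P (int a)\<bar> = b"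
    then have "P (int a) = P (int b) \<or> P (int a) = - P (int b)"
      using assms(3) by auto
    then have "P (int a) = P (int b) \<or> P (int a) = P (- int b)"
      using assms(1) by (simp add: odd_fun_def)
    then have "int a = int b \<or> int a = - int b"
      using injD[OF assms(2)] by blast
    then show False using assms(4) by simp
  qed
  moreover have "(\<exists>s. ((s = a) \<noteq> (s = b)) \<and> y = nat \<bar>P (int s)\<bar>) \<longleftrightarrow> y = nat \<bar>P (int a)\<bar> \<or> y = b" for y
    using assms(3,4) by auto
  ultimately have "(\<lambda>y. \<exists>s. ((s = a) \<noteq> (s = b)) \<and> y = nat \<bar>P (int s)\<bar>)
      = (\<lambda>y. (y = nat \<bar>P (int a)\<bar>) \<noteq> (y = b))"
    by auto
  then show ?thesis using comp_sign_flip[OF assms(1,2)] by simp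
qed

lemma wD_eq_sign_flip: "1 \<le> k \<Longrightarrow> wD k = sign_flip (\<lambda>s. (s = 1) \<noteq> (s = k + 1))"
proof (induction k rule: dec_induct)
  case base
  show ?case by (auto simp: wD_def fun_eq_iff sign_flip_def sD_def s1'_def)
next
  case (step k)
  have "wD (Suc k) = sD (Suc k) \<circ> wD k \<circ> sD (Suc k)"
    using step.hyps by (simp add: wD_def comp_assoc)
  also have "\<dots> = sign_flip (\<lambda>s. (s = 1) \<noteq> (s = Suc k + 1))"
    unfolding step.IH using step.hyps by (auto simp: fun_eq_iff sign_flip_def sD_def nat_eq_iff)
  finally show ?case .
qed

section \<open>The cycles \<open>t_k\<close>\<close>

lemma tD_fixpoint: "int k < \<bar>x\<bar> \<Longrightarrow> tD k x = x"
  unfolding tD_def by (rule prodl_fixpoint) (auto simp: sD_def)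

lemma tD_Suc: "1 \<le> k \<Longrightarrow> tD (Suc k) = tD k \<circ> sD k"
  by (simp add: tD_def)

lemma tD_cycle:
  assumes "1 \<le> k"
  shows "(\<forall>x. 1 \<le> x \<and> x < int k \<longrightarrow> tD k x = x + 1) \<and> tD k (int k) = 1"
  using assms
proof (induction k rule: dec_induct)
  case base
  then show ?case by (simp add: tD_def)
next
  case (step k)
  have "tD (Suc k) x = x + 1" if "1 \<le> x" "x < int (Suc k)" for x
  proof (cases "x < int k")
    case True
    then have "sD k x = x" using that by (auto simp: sD_def)
    then show ?thesis using step True that tD_Suc by simp
  next
    case False
    then have "x = int k" using that by simp
    moreover have "tD k (int k + 1) = int k + 1" by (rule tD_fixpoint) simp
    ultimately show ?thesis using step tD_Suc by (simp add: sD_def)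
  qed
  moreover have "tD (Suc k) (int (Suc k)) = 1"
    using step tD_Suc by (simp add: sD_def)
  ultimately show ?case by blast
qed

lemma tD_funpow_shift: "1 \<le> x \<Longrightarrow> x + int m \<le> int k \<Longrightarrow> (tD k ^^ m) x = x + int m"
proof (induction m)
  case 0
  then show ?case by simp
next
  case (Suc m)
  then have "1 \<le> k" by linarith
  then show ?case using Suc tD_cycle[of k] by simp
qed

lemma tD_funpow_wrap:
  assumes "1 \<le> x" "x + int (Suc m) = int k + 1"
  shows "(tD k ^^ Suc m) x = 1"
proof -
  have "1 \<le> k" using assms by linarith
  moreover have "(tD k ^^ m) x = int k" using tD_funpow_shift[of x m k] assms by simp
  ultimately show ?thesis using tD_cycle[of k] by simp
qed

lemma prodl_tD_funpow_shift:
  assumes "\<And>k. k \<in> set ks \<Longrightarrow> i k = 0 \<or> K \<le> k" "1 \<le> x" "x + int (sum_list (map i ks)) \<le> int K"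
  shows "prodl (map (\<lambda>k. tD k ^^ i k) ks) x = x + int (sum_list (map i ks))"
  using assms
proof (induction ks)
  case Nil
  then show ?case by simp
next
  case (Cons k ks)
  then have IH: "prodl (map (\<lambda>k. tD k ^^ i k) ks) x = x + int (sum_list (map i ks))"
    by simp
  show ?case
  proof (cases "i k = 0")
    case True
    then show ?thesis using IH by simp
  next
    case False
    then have "K \<le> k" using Cons.prems(1)[of k] by simp
    then show ?thesis using IH Cons.prems by (simp add: tD_funpow_shift)
  qed
qed

definition tprod :: "(nat \<Rightarrow> nat) \<Rightarrow> nat \<Rightarrow> int \<Rightarrow> int" where
  "tprod i L = prodl (map (\<lambda>k. tD k ^^ i k) [2..<L + 1])"

lemma tprod_Suc: "1 \<le> L \<Longrightarrow> tprod i (Suc L) = tprod i L \<circ> (tD (Suc L) ^^ i (Suc L))"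
  by (simp add: tprod_def)

lemma tprod_in_Scirc: "L \<le> n \<Longrightarrow> tprod i L \<in> Scirc n"
  unfolding tprod_def by (rule prodl_in_Scirc) (auto intro!: funpow_in_Scirc tD_in_Scirc)

lemma tprod_fixpoint: "tprod i L (int L + 1) = int L + 1"
  unfolding tprod_def by (rule prodl_fixpoint) (auto intro!: funpow_fixpoint tD_fixpoint)

lemma pi_circ_eq_tprod: "pi_circ n i = tprod i n"
  unfolding pi_circ_def tprod_def
proof (rule prodl_map_filter)
  fix k
  assume "\<not> 1 \<le> i k"
  then have "i k = 0" by simp
  then show "tD k ^^ i k = id" by simp
qed

lemma tprod_comp_wD:
  assumes "1 \<le> L"
  shows "tprod i L \<circ> wD L = sign_flip (\<lambda>y. (y = nat \<bar>tprod i L 1\<bar>) \<noteq> (y = L + 1)) \<circ> tprod i L"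
proof -
  have "tprod i L \<in> Dn L" using tprod_in_Scirc Scirc_subset_Dn by blast
  then have "odd_fun (tprod i L)" "inj (tprod i L)" using Dn_odd_fun Dn_inj by blast+
  moreover have "tprod i L (int (L + 1)) = int (L + 1)"
    using tprod_fixpoint[of i L] by (simp add: add.commute)
  ultimately show ?thesis
    using comp_sign_flip_pair[of "tprod i L" "L + 1" 1] wD_eq_sign_flip[OF assms] assms by simp
qed

lemma elemD_Suc:
  "1 \<le> n \<Longrightarrow> elemD (Suc n) i j = elemD n i j \<circ> (wD n ^^ j n) \<circ> (tD (Suc n) ^^ i (Suc n))"
  by (simp add: elemD_def comp_assoc)

lemma elemD_eq_sign_flip_comp_tprod:
  assumes "\<And>k. 1 \<le> k \<Longrightarrow> k < n \<Longrightarrow> j k \<le> 1"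
  shows "elemD n i j = sign_flip (\<lambda>y. odd (length (filter
            (\<lambda>L. j L = 1 \<and> ((y = nat \<bar>tprod i L 1\<bar>) \<noteq> (y = L + 1))) [1..<n]))) \<circ> tprod i n"
  using assms
proof (induction n)
  case 0
  then show ?case by (simp add: elemD_def tprod_def sign_flip_False)
next
  case (Suc n)
  show ?case
  proof (cases "n = 0")
    case True
    then show ?thesis by (simp add: elemD_def tprod_def sign_flip_False)
  next
    case False
    define X where "X = (\<lambda>y. odd (length (filter
            (\<lambda>L. j L = 1 \<and> ((y = nat \<bar>tprod i L 1\<bar>) \<noteq> (y = L + 1))) [1..<n])))"
    define T where "T = tD (Suc n) ^^ i (Suc n)"
    have "elemD (Suc n) i j = elemD n i j \<circ> (wD n ^^ j n) \<circ> T"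
      using False elemD_Suc by (simp add: T_def)
    also have "\<dots> = sign_flip X \<circ> tprod i n \<circ> (wD n ^^ j n) \<circ> T"
      unfolding X_def using Suc by (simp only:)
    finally have elem: "elemD (Suc n) i j = sign_flip X \<circ> tprod i n \<circ> (wD n ^^ j n) \<circ> T" .
    have tprod: "tprod i (Suc n) = tprod i n \<circ> T"
      using False tprod_Suc by (simp add: T_def)
    have "j n = 0 \<or> j n = 1" using Suc.prems[of n] False by linarith
    then show ?thesis
    proof
      assume "j n = 0"
      then show ?thesis using elem tprod False by (simp add: X_def comp_assoc)
    next
      assume jn: "j n = 1"
      define Y where "Y = (\<lambda>y. (y = nat \<bar>tprod i n 1\<bar>) \<noteq> (y = n + 1))"
      have "elemD (Suc n) i j = sign_flip X \<circ> (tprod i n \<circ> wD n) \<circ> T"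
        using elem jn by (simp add: comp_assoc)
      also have "\<dots> = sign_flip X \<circ> sign_flip Y \<circ> tprod i n \<circ> T"
        using False tprod_comp_wD[of n i, folded Y_def] by (simp add: comp_assoc)
      also have "\<dots> = sign_flip (\<lambda>y. X y \<noteq> Y y) \<circ> tprod i (Suc n)"
        by (metis sign_flip_comp tprod comp_assoc)
      also have "(\<lambda>y. X y \<noteq> Y y) = (\<lambda>y. odd (length (filter
            (\<lambda>L. j L = 1 \<and> ((y = nat \<bar>tprod i L 1\<bar>) \<noteq> (y = L + 1))) [1..<Suc n])))"
        using jn False by (auto simp: X_def Y_def fun_eq_iff)
      finally show ?thesis .
    qed
  qed
qed

section \<open>Runs of \<open>w\<close>-factors\<close>

lemma odd_length_filter_xor:
  "odd (length (filter (\<lambda>x. P x \<noteq> Q x) xs)) \<longleftrightarrow>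
   odd (length (filter P xs)) \<noteq> odd (length (filter Q xs))"
  by (induction xs) auto

lemma maj_at_eq:
  assumes "L0 \<le> L" "\<And>k. L0 < k \<Longrightarrow> k \<le> L \<Longrightarrow> i k = 0"
  shows "maj_at i L = maj_at i L0"
  unfolding maj_at_def by (rule sum.mono_neutral_right) (use assms in auto)

lemma maj_at_run_of: "L' \<in> run_of n i j L \<Longrightarrow> maj_at i L' = maj_at i L"
  by (rule maj_at_eq) (auto simp: run_of_def)

lemma finite_run_of: "finite (run_of n i j L)"
  by (rule finite_subset[of _ "{..n}"]) (auto simp: run_of_def)

lemma run_of_disjoint:
  assumes "run_start n i j a" "run_start n i j b" "a \<noteq> b"
  shows "run_of n i j a \<inter> run_of n i j b = {}"
proof -
  have disjoint: "run_of n i j a \<inter> run_of n i j b = {}"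
    if ra: "run_start n i j a" and rb: "run_start n i j b" and "a < b" for a b
  proof -
    have "1 \<le> a" "j a = 1" using ra by (simp_all add: run_start_def)
    then obtain k where k: "a < k" "k \<le> b" "1 \<le> i k"
      using rb \<open>a < b\<close> unfolding run_start_def by auto
    have "x \<notin> run_of n i j a" if "x \<in> run_of n i j b" for x
    proof
      assume "x \<in> run_of n i j a"
      moreover have "k \<le> x" using that k(2) by (simp add: run_of_def)
      ultimately have "i k = 0" using k(1) by (simp add: run_of_def)
      then show False using k(3) by simp
    qed
    then show ?thesis by blast
  qed
  from assms(3) consider "a < b" | "b < a" by linarith
  then show ?thesis
  proof cases
    case 1
    then show ?thesis using disjoint[of a b] assms(1,2) by blast
  next
    case 2
    then show ?thesis using disjoint[of b a] assms(1,2) by (metis Int_commute)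
  qed
qed

lemma run_start_exists:
  "1 \<le> L \<Longrightarrow> L < n \<Longrightarrow> j L = 1 \<Longrightarrow> \<exists>L0. run_start n i j L0 \<and> L \<in> run_of n i j L0"
proof (induction L rule: less_induct)
  case (less L)
  show ?case
  proof (cases "run_start n i j L")
    case True
    then show ?thesis using less.prems by (intro exI[of _ L]) (auto simp: run_of_def)
  next
    case False
    with less.prems obtain L' where L': "1 \<le> L'" "L' < L" "j L' = 1"
      and no_t: "\<not> (\<exists>k. L' < k \<and> k \<le> L \<and> 1 \<le> i k)"
      unfolding run_start_def by auto
    from no_t have gap: "i k = 0" if "L' < k" "k \<le> L" for k
      using that by auto
    obtain L0 where L0: "run_start n i j L0" "L' \<in> run_of n i j L0"
      using less.IH[of L'] L' less.prems by auto
    have "i k = 0" if "L0 < k" "k \<le> L" for k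
      using L0(2) gap that by (cases "k \<le> L'") (auto simp: run_of_def)
    then have "L \<in> run_of n i j L0"
      using L0(2) less.prems L' by (auto simp: run_of_def)
    then show ?thesis using L0(1) by blast
  qed
qed

text \<open>The \<open>w\<close>-factors with a given value of \<open>maj\<close> are a union of whole runs, so their number
  has the parity of the number of odd runs among them.\<close>

lemma odd_length_filter_runs:
  "odd (length (filter (\<lambda>L. j L = 1 \<and> G (maj_at i L)) [1..<n])) \<longleftrightarrow>
   odd (length (filter (\<lambda>L. run_start n i j L \<and> odd (card (run_of n i j L)) \<and> G (maj_at i L)) [1..<n]))"
proof -
  define R where "R = {L. run_start n i j L \<and> G (maj_at i L)}"
  have R_sub: "R \<subseteq> {1..<n}" by (auto simp: R_def run_start_def)
  then have "finite R" by (rule finite_subset) simp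
  have ones: "{L \<in> {1..<n}. j L = 1 \<and> G (maj_at i L)} = (\<Union>L0\<in>R. run_of n i j L0)"
  proof (intro equalityI subsetI)
    fix L assume L: "L \<in> {L \<in> {1..<n}. j L = 1 \<and> G (maj_at i L)}"
    then obtain L0 where "run_start n i j L0" "L \<in> run_of n i j L0"
      using run_start_exists[of L n j i] by auto
    moreover have "G (maj_at i L)" using L by simp
    ultimately show "L \<in> (\<Union>L0\<in>R. run_of n i j L0)"
      by (auto simp: R_def maj_at_run_of)
  next
    fix L assume "L \<in> (\<Union>L0\<in>R. run_of n i j L0)"
    then obtain L0 where "L0 \<in> R" "L \<in> run_of n i j L0" by blast
    then show "L \<in> {L \<in> {1..<n}. j L = 1 \<and> G (maj_at i L)}"
      by (auto simp: R_def run_of_def run_start_def maj_at_run_of)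
  qed
  have "card {L \<in> {1..<n}. j L = 1 \<and> G (maj_at i L)} = (\<Sum>L0\<in>R. card (run_of n i j L0))"
    unfolding ones using \<open>finite R\<close>
    by (rule card_UN_disjoint) (simp_all add: R_def finite_run_of run_of_disjoint)
  then have "even (card {L \<in> {1..<n}. j L = 1 \<and> G (maj_at i L)}) \<longleftrightarrow>
      even (card {L0 \<in> R. odd (card (run_of n i j L0))})"
    using even_sum_iff[OF \<open>finite R\<close>] by simp
  moreover have "{L0 \<in> R. odd (card (run_of n i j L0))} =
      {L \<in> {1..<n}. run_start n i j L \<and> odd (card (run_of n i j L)) \<and> G (maj_at i L)}"
    using R_sub by (auto simp: R_def)
  ultimately show ?thesis
    by (simp add: distinct_length_filter Int_def conj_commute)
qed

section \<open>The elementary case\<close>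

lemma maj_at_eq_sum_list: "maj_at i L = sum_list (map i [2..<L + 1])"
proof -
  have "{2..L} = set [2..<L + 1]" by auto
  then show ?thesis unfolding maj_at_def by (metis sum_set_upt_conv_sum_list_nat)
qed

lemma pi_bullet_eq_sign_flip:
  "pi_bullet n i j = sign_flip (\<lambda>y.
     odd (length (filter (\<lambda>L. (y = 1) \<noteq> (y = maj_at i L + 1)) (A_starts n i j))) \<noteq>
     odd (length (filter (\<lambda>L. (y = 1) \<noteq> (y = L + 1)) (filter (\<lambda>L. j L = 1) [1..<n]))))"
proof -
  have A: "map (\<lambda>L. wD (maj_at i L)) (A_starts n i j) =
      map (\<lambda>L. sign_flip (\<lambda>y. (y = 1) \<noteq> (y = maj_at i L + 1))) (A_starts n i j)"
    by (auto simp: A_starts_def wD_eq_sign_flip)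
  have ones: "map wD (filter (\<lambda>L. j L = 1) [1..<n]) =
      map (\<lambda>L. sign_flip (\<lambda>y. (y = 1) \<noteq> (y = L + 1))) (filter (\<lambda>L. j L = 1) [1..<n])"
    by (auto simp: wD_eq_sign_flip)
  show ?thesis
    unfolding pi_bullet_def A ones prodl_sign_flips sign_flip_comp ..
qed

lemma odd_fun_tD: "odd_fun (tD k)"
  using Scirc_odd_fun tD_in_Scirc[OF order.refl] by blast

lemma Phi_pi_circ: "Phi (pi_circ n i) = prodl (map (\<lambda>k. tS k ^^ i k) [2..<n + 1])"
proof -
  have "Phi (pi_circ n i) = prodl (map Phi (map (\<lambda>k. tD k ^^ i k) [2..<n + 1]))"
    unfolding pi_circ_eq_tprod tprod_def by (rule Phi_prodl) (auto intro: odd_fun_funpow odd_fun_tD)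
  also have "\<dots> = prodl (map (\<lambda>k. tS k ^^ i k) [2..<n + 1])"
    by (simp add: comp_def Phi_funpow Phi_tD odd_fun_tD)
  finally show ?thesis .
qed

locale elementary =
  fixes n :: nat and i :: "nat \<Rightarrow> nat"
  assumes tIdx_nonempty: "tIdx n i \<noteq> {}"
    and sum_le_k1: "(\<Sum>k\<in>tIdx n i. i k) \<le> k1 n i"
begin

lemma finite_tIdx: "finite (tIdx n i)"
  by (rule finite_subset[of _ "{..n}"]) (auto simp: tIdx_def)

lemma k1_in_tIdx: "k1 n i \<in> tIdx n i"
  unfolding k1_def using finite_tIdx tIdx_nonempty by (rule Min_in)

lemma k1_le: "k \<in> tIdx n i \<Longrightarrow> k1 n i \<le> k"
  unfolding k1_def using finite_tIdx by simp

lemma exponent_below_k1: "2 \<le> k \<Longrightarrow> k < k1 n i \<Longrightarrow> i k = 0"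
  using k1_le[of k] k1_in_tIdx by (fastforce simp: tIdx_def)

lemma maj_at_le_k1: "L \<le> n \<Longrightarrow> maj_at i L \<le> k1 n i"
proof -
  assume "L \<le> n"
  then have "maj_at i L = (\<Sum>k\<in>{2..L} \<inter> tIdx n i. i k)"
    unfolding maj_at_def by (intro sum.mono_neutral_right) (auto simp: tIdx_def)
  also have "\<dots> \<le> (\<Sum>k\<in>tIdx n i. i k)"
    using finite_tIdx by (intro sum_mono2) auto
  finally show ?thesis using sum_le_k1 by simp
qed

text \<open>Applying \<open>t_L^(i_L)\<close>, ..., \<open>t_2^(i_2)\<close> in turn, the point 1 climbs by each exponent; since
  the exponents add up to at most \<open>k_1\<close>, it can only wrap around back to 1 inside \<open>t_(k_1)\<close>, which
  happens exactly when \<open>maj\<close> reaches \<open>k_1\<close>.\<close>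

lemma tprod_at_one:
  assumes "L \<le> n"
  shows "tprod i L 1 = (if maj_at i L < k1 n i then 1 + int (maj_at i L) else 1)"
proof -
  define K where "K = k1 n i"
  have K: "2 \<le> K" "K \<le> n" "1 \<le> i K"
    using k1_in_tIdx by (auto simp: K_def tIdx_def)
  have zero: "i k = 0" if "2 \<le> k" "k < K" for k
    using exponent_below_k1 that by (simp add: K_def)
  show ?thesis
  proof (cases "maj_at i L < K")
    case True
    have "tprod i L 1 = 1 + int (maj_at i L)"
      unfolding tprod_def maj_at_eq_sum_list
      by (rule prodl_tD_funpow_shift[where K = K])
        (use True zero in \<open>auto simp: maj_at_eq_sum_list not_le\<close>)
    then show ?thesis using True by (simp add: K_def)
  next
    case False
    then have maj: "maj_at i L = K"
      using maj_at_le_k1[OF assms] by (simp add: K_def)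
    have "K \<le> L"
    proof (rule ccontr)
      assume "\<not> K \<le> L"
      then have "maj_at i L = 0" using zero by (simp add: maj_at_def)
      then show False using maj K by simp
    qed
    then have split: "[2..<L + 1] = [2..<K] @ K # [K + 1..<L + 1]"
      using K(1) by (metis Suc_eq_plus1 le_SucI upt_conv_Cons upt_add_eq_append le_add_diff_inverse
          less_Suc_eq_le not_less_eq_eq)
    define s where "s = sum_list (map i [K + 1..<L + 1])"
    have "sum_list (map i [2..<K]) = 0"
      using zero by (simp add: sum_list_eq_0_iff)
    then have maj_split: "maj_at i L = i K + s"
      unfolding maj_at_eq_sum_list split s_def by simp
    obtain m where m: "i K = Suc m" using K(3) by (cases "i K") auto
    have "prodl (map (\<lambda>k. tD k ^^ i k) [K + 1..<L + 1]) 1 = 1 + int s"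
      unfolding s_def
      by (rule prodl_tD_funpow_shift[where K = K]) (use maj maj_split K(3) s_def in auto)
    moreover have "(tD K ^^ i K) (1 + int s) = 1"
      unfolding m by (rule tD_funpow_wrap) (use maj maj_split m in auto)
    moreover have "prodl (map (\<lambda>k. tD k ^^ i k) [2..<K]) 1 = 1"
      using zero by (intro prodl_fixpoint) auto
    ultimately have "tprod i L 1 = 1" unfolding tprod_def split by simp
    then show ?thesis using False by (simp add: K_def)
  qed
qed

lemma pi_bullet_in_IdBullet: "pi_bullet n i j \<in> IdBullet n"
proof -
  have "k1 n i \<le> n" using k1_in_tIdx by (simp add: tIdx_def)
  then have "maj_at i L < n" if "L \<in> set (A_starts n i j)" for L
    using that by (auto simp: A_starts_def)
  then have "pi_bullet n i j \<in> Dn n"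
    unfolding pi_bullet_def
    by (intro Dn_comp prodl_in_Dn) (auto intro!: wD_in_Dn)
  then show ?thesis
    unfolding IdBullet_def by (simp add: pi_bullet_eq_sign_flip Phi_sign_flip)
qed

lemma elemD_sign_change_parity:
  "odd (length (filter (\<lambda>L. j L = 1 \<and> ((y = nat \<bar>tprod i L 1\<bar>) \<noteq> (y = L + 1))) [1..<n])) \<longleftrightarrow>
   odd (length (filter (\<lambda>L. (y = 1) \<noteq> (y = maj_at i L + 1)) (A_starts n i j))) \<noteq>
   odd (length (filter (\<lambda>L. (y = 1) \<noteq> (y = L + 1)) (filter (\<lambda>L. j L = 1) [1..<n])))"
proof -
  define G where "G m \<longleftrightarrow> 1 \<le> m \<and> m < k1 n i \<and> ((y = m + 1) \<noteq> (y = 1))" for m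
  have "((y = nat \<bar>tprod i L 1\<bar>) \<noteq> (y = L + 1)) \<longleftrightarrow> G (maj_at i L) \<noteq> ((y = 1) \<noteq> (y = L + 1))"
    if "L \<in> set [1..<n]" for L
    using that tprod_at_one[of L] by (auto simp: G_def)
  then have "odd (length (filter (\<lambda>L. j L = 1 \<and> ((y = nat \<bar>tprod i L 1\<bar>) \<noteq> (y = L + 1))) [1..<n])) \<longleftrightarrow>
      odd (length (filter (\<lambda>L. (j L = 1 \<and> G (maj_at i L)) \<noteq> (j L = 1 \<and> ((y = 1) \<noteq> (y = L + 1)))) [1..<n]))"
    by (intro arg_cong[where f = "\<lambda>xs. odd (length xs)"] filter_cong) auto
  also have "\<dots> \<longleftrightarrow>
      odd (length (filter (\<lambda>L. run_start n i j L \<and> odd (card (run_of n i j L)) \<and> G (maj_at i L)) [1..<n])) \<noteq>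
      odd (length (filter (\<lambda>L. j L = 1 \<and> ((y = 1) \<noteq> (y = L + 1))) [1..<n]))"
    unfolding odd_length_filter_xor odd_length_filter_runs ..
  also have "\<dots> \<longleftrightarrow>
      odd (length (filter (\<lambda>L. (y = 1) \<noteq> (y = maj_at i L + 1)) (A_starts n i j))) \<noteq>
      odd (length (filter (\<lambda>L. (y = 1) \<noteq> (y = L + 1)) (filter (\<lambda>L. j L = 1) [1..<n])))"
    unfolding A_starts_def run_starts_def filter_filter G_def by (simp add: conj_ac eq_commute)
  finally show ?thesis .
qed

lemma elemD_eq_pi_bullet_comp_pi_circ:
  assumes "\<And>k. 1 \<le> k \<Longrightarrow> k < n \<Longrightarrow> j k \<le> 1"
  shows "elemD n i j = pi_bullet n i j \<circ> pi_circ n i"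
  using elemD_eq_sign_flip_comp_tprod[OF assms]
  by (simp only: elemD_sign_change_parity pi_bullet_eq_sign_flip pi_circ_eq_tprod)

end

theorem mainTheorem8:
  fixes n :: nat and i j :: "nat \<Rightarrow> nat"
  assumes "2 \<le> n"
    and "valid_exps n i j"
    and "tIdx n i \<noteq> {}"
    and "(\<Sum>k\<in>tIdx n i. i k) \<le> k1 n i"
  shows "pi_bullet n i j \<in> IdBullet n \<and> pi_circ n i \<in> Scirc n
         \<and> elemD n i j = pi_bullet n i j \<circ> pi_circ n i
         \<and> (\<forall>a b. a \<in> IdBullet n \<and> b \<in> Scirc n \<and> elemD n i j = a \<circ> b
                \<longrightarrow> a = pi_bullet n i j \<and> b = pi_circ n i)
         \<and> Phi (pi_circ n i) = prodl (map (\<lambda>k. tS k ^^ i k) [2..<n+1])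
         \<and> Phi (pi_circ n i) = Phi (elemD n i j)"
proof -
  interpret elementary n i
    using assms(3,4) by unfold_locales
  have "\<And>k. 1 \<le> k \<Longrightarrow> k < n \<Longrightarrow> j k \<le> 1"
    using assms(2) by (simp add: valid_exps_def)
  then have factor: "elemD n i j = pi_bullet n i j \<circ> pi_circ n i"
    by (rule elemD_eq_pi_bullet_comp_pi_circ)
  have bullet: "pi_bullet n i j \<in> IdBullet n"
    by (rule pi_bullet_in_IdBullet)
  have circ: "pi_circ n i \<in> Scirc n"
    by (simp add: pi_circ_eq_tprod tprod_in_Scirc)
  have "Phi (elemD n i j) = Phi (pi_circ n i)"
    unfolding factor using bullet by (rule Phi_comp_IdBullet)
  then show ?thesis
    using factor bullet circ Phi_pi_circ IdBullet_Scirc_factorization_unique by metis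
qed

end
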